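(* Let $(E,\rho)$ be a Polish metric space and $\Psi$ an $E$-valued time-homogeneous Markov process with transition semigroup $\{P(t)\}_{t\geq 0}$ and initial distribution $\mu$ on $(\Omega,\mathcal{F},\mathbb{P}_\mu)$. Let $V:E\to[0,\infty)$ be continuous and assume: (a) $P(t)(C_b(E))\subset C_b(E)$ for all $t\geq0$; (b) $\{P(t)\}$ has a unique invariant probability measure $\mu_*$, and there are $\gamma>0$ and $C:\{\nu\in\mathcal{M}_1(E):\int V\,d\nu<\infty\}\to[0,\infty)$ with $d_{\mathrm{FM}}(\nu P(t),\mu_* )\leq C(\nu)e^{-\gamma t}$ for all $t\geq0$ and such $\nu$, where $C(\delta_x)=\varkappa(V(x)+1)^{1/2}$ for some $\varkappa>0$; (c) there exist $A,B\geq 0$, $\Gamma>0$ with $P(t)V^2(x)\leq Ae^{-\Gamma t}V^2(x)+B$ for all $x,t$; (d) $\int_E V^2\,d\mu<\infty$. Fix $g\in\operatorname{Lip}_b(E)$, let $\bar g=g-\int g\,d\mu_*$, $\chi(x)=\int_0^\infty P(t)\bar g(x)\,dt$, and $Z(n)=\chi(\Psi(n))-\chi(\Psi(n-1))+\int_{n-1}^n\bar g(\Psi(s))\,ds$ for $n\in\mathbb{N}$. Then for every $\varepsilon>0$, $$\lim_{n\to\infty}\frac1n\sum_{i=0}^{n-1}\mathbb{E}_\mu\left(Z(i+1)^2\mathbb{1}_{\{|Z(i+1)|\geq\varepsilon\sqrt n\}}\right)=0.$$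
   Context: $\mathcal{M}_1(E)$: Borel probability measures; $\operatorname{Lip}_b(E)$: bounded Lipschitz functions with $\|f\|_{\mathrm{BL}}=\max\{\|f\|_\infty,\sup_{x\neq y}|f(x)-f(y)|/\rho(x,y)\}$; $d_{\mathrm{FM}}(\mu,\nu)=\sup\{|\int f\,d\mu-\int f\,d\nu|:\|f\|_{\mathrm{BL}}\leq1\}$. $P(t)f(x)=\int f(y)P(t)(x,dy)$, $\nu P(t)=\int P(t)(x,\cdot)\nu(dx)$. *)

theory Defs
  imports "HOL-Probability.Probability"
begin

definition prob_measures :: "('e::topological_space) measure set" where
  "prob_measures = {\<nu>. prob_space \<nu> \<and> sets \<nu> = sets borel}"

definition Lip_b :: "('e::metric_space \<Rightarrow> real) set" where
  "Lip_b = {f. bounded (range f) \<and> (\<exists>L. L-lipschitz_on UNIV f)}"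

definition BL_unit_ball :: "('e::metric_space \<Rightarrow> real) set" where
  "BL_unit_ball = {f. (\<forall>x. \<bar>f x\<bar> \<le> 1) \<and> (\<forall>x y. \<bar>f x - f y\<bar> \<le> dist x y)}"

definition d_FM :: "('e::metric_space) measure \<Rightarrow> 'e measure \<Rightarrow> real" where
  "d_FM \<mu> \<nu> = (SUP f\<in>BL_unit_ball. \<bar>integral\<^sup>L \<mu> f - integral\<^sup>L \<nu> f\<bar>)"

definition Pfun :: "(real \<Rightarrow> 'e \<Rightarrow> 'e measure) \<Rightarrow> real \<Rightarrow> ('e \<Rightarrow> real) \<Rightarrow> 'e \<Rightarrow> real" where
  "Pfun P t f x = integral\<^sup>L (P t x) f"

definition Pmeas :: "(real \<Rightarrow> 'e \<Rightarrow> 'e measure) \<Rightarrow> real \<Rightarrow> 'e measure \<Rightarrow> 'e measure" where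
  "Pmeas P t \<nu> = \<nu> \<bind> P t"

definition transition_semigroup :: "(real \<Rightarrow> 'e::topological_space \<Rightarrow> 'e measure) \<Rightarrow> bool" where
  "transition_semigroup P \<longleftrightarrow>
     (\<forall>t\<ge>0. \<forall>x. prob_space (P t x) \<and> sets (P t x) = sets borel) \<and>
     (\<forall>t\<ge>0. P t \<in> measurable borel (subprob_algebra borel)) \<and>
     (\<forall>x. P 0 x = return borel x) \<and>
     (\<forall>s\<ge>0. \<forall>t\<ge>0. \<forall>x. P (s + t) x = P s x \<bind> P t)"

definition nat_filtration :: "'w measure \<Rightarrow> (real \<Rightarrow> 'w \<Rightarrow> 'e::topological_space) \<Rightarrow> real \<Rightarrow> 'w measure" where
  "nat_filtration M \<Psi> t =
     sigma (space M) (\<Union>r\<in>{0..t}. {\<Psi> r -` A \<inter> space M | A. A \<in> sets borel})"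

definition markov_process ::
  "'w measure \<Rightarrow> (real \<Rightarrow> 'w \<Rightarrow> 'e::topological_space) \<Rightarrow> (real \<Rightarrow> 'e \<Rightarrow> 'e measure) \<Rightarrow> bool" where
  "markov_process M \<Psi> P \<longleftrightarrow>
     prob_space M \<and> transition_semigroup P \<and>
     (\<lambda>p. \<Psi> (fst p) (snd p)) \<in> measurable (restrict_space lborel {0..} \<Otimes>\<^sub>M M) borel \<and>
     (\<forall>t\<ge>0. \<forall>s\<ge>0. \<forall>A\<in>sets borel.
        AE \<omega> in M. real_cond_exp M (nat_filtration M \<Psi> t) (\<lambda>\<omega>. indicator A (\<Psi> (t + s) \<omega>)) \<omega>
                    = measure (P s (\<Psi> t \<omega>)) A)"

definition invariant_measure :: "(real \<Rightarrow> 'e \<Rightarrow> 'e measure) \<Rightarrow> 'e::topological_space measure \<Rightarrow> bool" where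
  "invariant_measure P \<nu> \<longleftrightarrow> \<nu> \<in> prob_measures \<and> (\<forall>t\<ge>0. Pmeas P t \<nu> = \<nu>)"

end

theory Submission
  imports Defs
begin

(* Proof idea: by the exponential Fortet-Mourier decay from Dirac initial conditions,
   |chi x| <= (c kappa / gamma) sqrt (V x + 1), where c bounds g and its Lipschitz constant;
   the time integral in Z is bounded by 2c.  Hence Z(i+1)^4 <= const (V(Psi(i+1))^2 + V(Psi i)^2 + 1),
   whose expectation is bounded uniformly in i by the Lyapunov condition (c) and the moment
   condition (d).  Uniformly bounded fourth moments imply the Lindeberg condition, since
   Z^2 1{|Z| >= eps sqrt n} <= Z^4 / (eps^2 n), so the averaged sum is O(1/n). *)

(* F need not be integrable, or even measurable: its Bochner integral is then 0.  This spares
   all measurability arguments about Z and chi. *)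
lemma abs_integral_le_integral_AE:
  fixes F G :: "'a \<Rightarrow> real"
  assumes "integrable M G" "AE x in M. \<bar>F x\<bar> \<le> G x"
  shows "\<bar>integral\<^sup>L M F\<bar> \<le> integral\<^sup>L M G"
proof (cases "integrable M F")
  case True
  have "\<bar>integral\<^sup>L M F\<bar> \<le> (\<integral>x. \<bar>F x\<bar> \<partial>M)"
    using integral_norm_bound[of M F] by simp
  also have "\<dots> \<le> integral\<^sup>L M G"
    using True assms by (intro integral_mono_AE) auto
  finally show ?thesis .
next
  case False
  have "0 \<le> integral\<^sup>L M G"
    using assms(2) by (intro integral_nonneg_AE) (auto elim: eventually_mono)
  then show ?thesis using not_integrable_integral_eq[OF False] by simp
qed

lemma abs_integral_le_const_prob:
  fixes F :: "'a \<Rightarrow> real"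
  assumes "prob_space M" "\<And>x. \<bar>F x\<bar> \<le> c"
  shows "\<bar>integral\<^sup>L M F\<bar> \<le> c"
proof -
  interpret prob_space M by fact
  have "\<bar>integral\<^sup>L M F\<bar> \<le> integral\<^sup>L M (\<lambda>_. c)"
    using assms(2) by (intro abs_integral_le_integral_AE) auto
  then show ?thesis by (simp add: prob_space)
qed

lemma abs_LBINT_Icc_le:
  fixes f :: "real \<Rightarrow> real"
  assumes "a \<le> b" "\<And>s. \<bar>f s\<bar> \<le> c"
  shows "\<bar>LBINT s:{a..b}. f s\<bar> \<le> c * (b - a)"
proof -
  have "\<bar>LBINT s:{a..b}. f s\<bar> \<le> (LBINT s:{a..b}. c)"
    unfolding set_lebesgue_integral_def
  proof (rule abs_integral_le_integral_AE)
    show "integrable lborel (\<lambda>s. indicator {a..b} s *\<^sub>R c)"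
      using assms(1) by (intro integrable_scaleR_left integrable_real_indicator) auto
  qed (use assms(2) in \<open>auto simp: indicator_def\<close>)
  also have "\<dots> = c * (b - a)"
    using assms(1) by (simp add: set_integral_const)
  finally show ?thesis .
qed

lemma abs_LBINT_Ici_le_exp:
  fixes f :: "real \<Rightarrow> real"
  assumes "\<gamma> > 0" "\<And>t. t \<ge> 0 \<Longrightarrow> \<bar>f t\<bar> \<le> K * exp (- \<gamma> * t)"
  shows "\<bar>LBINT t:{0..}. f t\<bar> \<le> K / \<gamma>"
proof -
  have exp_int: "set_integrable lborel {0<..} (\<lambda>t. K * exp (- (t * \<gamma>)))"
    using assms(1) by (intro set_integrable_mult_right integrable_I0i_exp_mscale)
  have "\<bar>LBINT t:{0..}. f t\<bar> \<le> (LBINT t:{0<..}. K * exp (- (t * \<gamma>)))"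
    unfolding set_lebesgue_integral_def
  proof (rule abs_integral_le_integral_AE)
    show "integrable lborel (\<lambda>t. indicator {0<..} t *\<^sub>R (K * exp (- (t * \<gamma>))))"
      using exp_int unfolding set_integrable_def .
    show "AE t in lborel. \<bar>indicator {0..} t *\<^sub>R f t\<bar> \<le> indicator {0<..} t *\<^sub>R (K * exp (- (t * \<gamma>)))"
      using AE_lborel_singleton[of 0]
      by eventually_elim (use assms(2) in \<open>auto simp: indicator_def mult.commute\<close>)
  qed
  also have "\<dots> = K / \<gamma>"
    using LBINT_I0i_exp_mscale[OF assms(1)]
    by (simp add: set_integral_mult_right interval_lebesgue_integral_0_infty)
  finally show ?thesis .
qed

lemma Lip_bE:
  fixes g :: "'e::metric_space \<Rightarrow> real"
  assumes "g \<in> Lip_b"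
  obtains c where "c > 0" "\<And>x. \<bar>g x\<bar> \<le> c" "\<And>x y. \<bar>g x - g y\<bar> \<le> c * dist x y"
proof -
  obtain G L where G: "\<And>x. \<bar>g x\<bar> \<le> G" and L: "L-lipschitz_on UNIV g"
    using assms unfolding Lip_b_def bounded_iff by auto
  have "0 \<le> L" "\<And>x y. \<bar>g x - g y\<bar> \<le> L * dist x y"
    using L unfolding lipschitz_on_def by (auto simp: dist_real_def)
  then have "\<bar>g x - g y\<bar> \<le> (max G L + 1) * dist x y" for x y
    by (smt (verit) mult_right_mono zero_le_dist)
  moreover have "\<bar>g x\<bar> \<le> max G L + 1" for x
    using G[of x] by linarith
  moreover have "max G L + 1 > 0"
    using \<open>0 \<le> L\<close> by linarith
  ultimately show ?thesis using that by blast
qed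

lemma abs_integral_diff_le_d_FM:
  fixes g :: "'e::metric_space \<Rightarrow> real"
  assumes N: "prob_space N" "sets N = sets borel" and Q: "prob_space Q" "sets Q = sets borel"
    and c: "c > 0" "\<And>x. \<bar>g x\<bar> \<le> c" "\<And>x y. \<bar>g x - g y\<bar> \<le> c * dist x y"
  shows "\<bar>integral\<^sup>L N g - integral\<^sup>L Q g\<bar> \<le> c * d_FM N Q"
proof -
  have "(\<lambda>x. g x / c) \<in> BL_unit_ball"
    using c by (auto simp: BL_unit_ball_def abs_div pos_divide_le_eq mult.commute
        simp flip: diff_divide_distrib)
  moreover have "bdd_above ((\<lambda>f. \<bar>integral\<^sup>L N f - integral\<^sup>L Q f\<bar>) ` BL_unit_ball)"
  proof (rule bdd_aboveI2)
    fix f :: "'e \<Rightarrow> real" assume "f \<in> BL_unit_ball"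
    then have "\<bar>integral\<^sup>L N f\<bar> \<le> 1" "\<bar>integral\<^sup>L Q f\<bar> \<le> 1"
      using abs_integral_le_const_prob N(1) Q(1) unfolding BL_unit_ball_def by blast+
    then show "\<bar>integral\<^sup>L N f - integral\<^sup>L Q f\<bar> \<le> 2" by linarith
  qed
  ultimately have "\<bar>integral\<^sup>L N (\<lambda>x. g x / c) - integral\<^sup>L Q (\<lambda>x. g x / c)\<bar> \<le> d_FM N Q"
    unfolding d_FM_def by (rule cSUP_upper)
  then show ?thesis
    using c(1) by (simp add: abs_div pos_divide_le_eq mult.commute flip: diff_divide_distrib)
qed

lemma markov_process_measurable:
  assumes "markov_process M \<Psi> P" "0 \<le> t"
  shows "\<Psi> t \<in> M \<rightarrow>\<^sub>M borel"
proof -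
  have "(\<lambda>p. \<Psi> (fst p) (snd p)) \<in> restrict_space lborel {0..} \<Otimes>\<^sub>M M \<rightarrow>\<^sub>M borel"
    using assms(1) unfolding markov_process_def by blast
  from measurable_Pair2[OF this, of t] show ?thesis
    using assms(2) by (simp add: space_restrict_space)
qed

lemma sigma_finite_subalgebra_nat_filtration:
  assumes markov: "markov_process M \<Psi> P" and t: "0 \<le> t"
  shows "sigma_finite_subalgebra M (nat_filtration M \<Psi> t)"
proof -
  interpret prob_space M
    using markov unfolding markov_process_def by blast
  let ?G = "\<Union>r\<in>{0..t}. {\<Psi> r -` A \<inter> space M | A. A \<in> sets borel}"
  have "?G \<subseteq> sets M"
    using markov_process_measurable[OF markov] by (auto simp: measurable_sets)
  then have sub: "subalgebra M (nat_filtration M \<Psi> t)"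
    unfolding subalgebra_def nat_filtration_def
    by (simp add: sets.sigma_sets_subset sets.space_closed subset_trans)
  show ?thesis
    by (intro sigma_finite_subalgebra.intro[OF sub] finite_measure.sigma_finite_measure
        finite_measure_restr_to_subalg[OF sub finite_measure_axioms])
qed

lemma markov_process_integral_indicator:
  assumes markov: "markov_process M \<Psi> P" and "0 \<le> t" "0 \<le> s" and A: "A \<in> sets borel"
  shows "(\<integral>\<omega>. indicator A (\<Psi> (t + s) \<omega>) \<partial>M) = (\<integral>\<omega>. measure (P s (\<Psi> t \<omega>)) A \<partial>M)"
proof -
  interpret prob_space M
    using markov unfolding markov_process_def by blast
  interpret F: sigma_finite_subalgebra M "nat_filtration M \<Psi> t"
    using sigma_finite_subalgebra_nat_filtration[OF markov \<open>0 \<le> t\<close>] .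
  have Pk: "P s \<in> borel \<rightarrow>\<^sub>M subprob_algebra borel"
    using markov \<open>0 \<le> s\<close> unfolding markov_process_def transition_semigroup_def by blast
  have meas: "\<Psi> r \<in> M \<rightarrow>\<^sub>M borel" if "0 \<le> r" for r
    using markov_process_measurable[OF markov that] .
  have "integrable M (\<lambda>\<omega>. indicator A (\<Psi> (t + s) \<omega>) :: real)"
    using meas[of "t + s"] A assms(2,3) by (intro integrable_const_bound[where B=1]) auto
  then have "(\<integral>\<omega>. indicator A (\<Psi> (t + s) \<omega>) \<partial>M)
      = (\<integral>\<omega>. real_cond_exp M (nat_filtration M \<Psi> t) (\<lambda>\<omega>. indicator A (\<Psi> (t + s) \<omega>)) \<omega> \<partial>M)"
    by (simp add: F.real_cond_exp_int(2))
  also have "\<dots> = (\<integral>\<omega>. measure (P s (\<Psi> t \<omega>)) A \<partial>M)"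
    using markov assms(2-4) unfolding markov_process_def
    by (intro integral_cong_AE borel_measurable_cond_exp2
        measurable_compose[OF meas measurable_compose[OF Pk measurable_measure_subprob_algebra]]) auto
  finally show ?thesis .
qed

lemma markov_process_distr:
  assumes markov: "markov_process M \<Psi> P" and s: "0 \<le> s"
  shows "distr M borel (\<Psi> s) = distr M borel (\<Psi> 0) \<bind> P s"
proof (rule measure_eqI)
  interpret prob_space M
    using markov unfolding markov_process_def by blast
  have Pk: "P s \<in> borel \<rightarrow>\<^sub>M subprob_algebra borel"
    and P_sets: "\<And>x. sets (P s x) = sets borel" and P_prob: "\<And>x. prob_space (P s x)"
    using markov s unfolding markov_process_def transition_semigroup_def by blast+
  have m0: "\<Psi> 0 \<in> M \<rightarrow>\<^sub>M borel" and ms: "\<Psi> s \<in> M \<rightarrow>\<^sub>M borel"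
    using markov_process_measurable[OF markov] s by auto
  show "sets (distr M borel (\<Psi> s)) = sets (distr M borel (\<Psi> 0) \<bind> P s)"
    using sets_bind[of _ "P s" borel] P_sets by simp
  fix A assume "A \<in> sets (distr M borel (\<Psi> s))"
  then have A: "A \<in> sets borel" by simp
  have P_A: "(\<lambda>x. measure (P s x) A) \<in> borel_measurable borel"
    using measurable_compose[OF Pk measurable_measure_subprob_algebra[OF A]] .
  have "emeasure (distr M borel (\<Psi> s)) A = (\<integral>\<^sup>+\<omega>. indicator A (\<Psi> s \<omega>) \<partial>M)"
    using A ms by (simp add: nn_integral_distr flip: nn_integral_indicator)
  also have "\<dots> = ennreal (\<integral>\<omega>. indicator A (\<Psi> s \<omega>) \<partial>M)"
    using A ms
    by (subst nn_integral_eq_integral[symmetric])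
       (auto intro: integrable_const_bound[where B=1] simp: ennreal_indicator)
  also have "(\<integral>\<omega>. indicator A (\<Psi> s \<omega>) \<partial>M) = (\<integral>\<omega>. measure (P s (\<Psi> 0 \<omega>)) A \<partial>M)"
    using markov_process_integral_indicator[OF markov order_refl s A] by simp
  also have "ennreal \<dots> = (\<integral>\<^sup>+\<omega>. measure (P s (\<Psi> 0 \<omega>)) A \<partial>M)"
    using m0 P_A P_prob
    by (intro nn_integral_eq_integral[symmetric] integrable_const_bound[where B=1])
       (auto simp: prob_space.prob_le_1)
  also have "\<dots> = (\<integral>\<^sup>+x. emeasure (P s x) A \<partial>distr M borel (\<Psi> 0))"
    using m0 P_A
    by (simp add: nn_integral_distr finite_measure.emeasure_eq_measure[OF prob_space.axioms(1)[OF P_prob]])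
  also have "\<dots> = emeasure (distr M borel (\<Psi> 0) \<bind> P s) A"
    using Pk A by (simp add: emeasure_bind)
  finally show "emeasure (distr M borel (\<Psi> s)) A = emeasure (distr M borel (\<Psi> 0) \<bind> P s) A" .
qed

lemma markov_process_expectation_le:
  fixes W :: "'e::topological_space \<Rightarrow> real"
  assumes markov: "markov_process M \<Psi> P" and t: "0 \<le> t"
    and W: "W \<in> borel_measurable borel" "\<And>x. 0 \<le> W x"
    and drift: "\<And>x. (\<integral>\<^sup>+y. ennreal (W y) \<partial>P t x) \<le> ennreal (A * W x + B)"
    and AB: "0 \<le> A" "0 \<le> B"
    and W0: "integrable M (\<lambda>\<omega>. W (\<Psi> 0 \<omega>))"
  shows "integrable M (\<lambda>\<omega>. W (\<Psi> t \<omega>))" "(\<integral>\<omega>. W (\<Psi> t \<omega>) \<partial>M) \<le> A * (\<integral>\<omega>. W (\<Psi> 0 \<omega>) \<partial>M) + B"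
proof -
  interpret prob_space M
    using markov unfolding markov_process_def by blast
  have Pk: "P t \<in> borel \<rightarrow>\<^sub>M subprob_algebra borel"
    using markov t unfolding markov_process_def transition_semigroup_def by blast
  have m0: "\<Psi> 0 \<in> M \<rightarrow>\<^sub>M borel" and mt: "\<Psi> t \<in> M \<rightarrow>\<^sub>M borel"
    using markov_process_measurable[OF markov] t by auto
  have "(\<integral>\<^sup>+\<omega>. W (\<Psi> t \<omega>) \<partial>M) = (\<integral>\<^sup>+x. W x \<partial>(distr M borel (\<Psi> 0) \<bind> P t))"
    using W(1) mt by (simp add: nn_integral_distr flip: markov_process_distr[OF markov t])
  also have "\<dots> = (\<integral>\<^sup>+x. (\<integral>\<^sup>+y. W y \<partial>P t x) \<partial>distr M borel (\<Psi> 0))"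
    using W(1) Pk by (intro nn_integral_bind) auto
  also have "\<dots> \<le> (\<integral>\<^sup>+x. ennreal (A * W x + B) \<partial>distr M borel (\<Psi> 0))"
    by (intro nn_integral_mono drift)
  also have "\<dots> = (\<integral>\<^sup>+\<omega>. ennreal (A * W (\<Psi> 0 \<omega>) + B) \<partial>M)"
    using W(1) m0 by (simp add: nn_integral_distr)
  also have "\<dots> = ennreal (A * (\<integral>\<omega>. W (\<Psi> 0 \<omega>) \<partial>M) + B)"
    using W0 W(2) AB by (subst nn_integral_eq_integral) (auto simp: prob_space)
  finally have bound: "(\<integral>\<^sup>+\<omega>. W (\<Psi> t \<omega>) \<partial>M) \<le> ennreal (A * (\<integral>\<omega>. W (\<Psi> 0 \<omega>) \<partial>M) + B)" .
  show int: "integrable M (\<lambda>\<omega>. W (\<Psi> t \<omega>))"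
    using W mt bound by (intro integrableI_nonneg) (auto simp: top.not_eq_extremum le_less_trans)
  have "0 \<le> A * (\<integral>\<omega>. W (\<Psi> 0 \<omega>) \<partial>M) + B"
    using W(2) AB by simp
  then show "(\<integral>\<omega>. W (\<Psi> t \<omega>) \<partial>M) \<le> A * (\<integral>\<omega>. W (\<Psi> 0 \<omega>) \<partial>M) + B"
    using bound int W(2) by (simp add: nn_integral_eq_integral)
qed

lemma markov_process_Lyapunov_moments:
  fixes V :: "'e::topological_space \<Rightarrow> real"
  assumes markov: "markov_process M \<Psi> P" and init: "distr M borel (\<Psi> 0) = \<mu>"
    and V: "V \<in> borel_measurable borel" and AB: "0 \<le> A" "0 \<le> B" and \<Gamma>: "0 \<le> \<Gamma>"
    and lyap: "\<forall>t\<ge>0. \<forall>x. (\<integral>\<^sup>+y. ennreal ((V y)\<^sup>2) \<partial>(P t x))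
                         \<le> ennreal (A * exp (- \<Gamma> * t) * (V x)\<^sup>2 + B)"
    and mom: "(\<integral>\<^sup>+x. ennreal ((V x)\<^sup>2) \<partial>\<mu>) < \<infinity>"
    and t: "0 \<le> t"
  shows "integrable M (\<lambda>\<omega>. (V (\<Psi> t \<omega>))\<^sup>2)"
    "(\<integral>\<omega>. (V (\<Psi> t \<omega>))\<^sup>2 \<partial>M) \<le> A * (\<integral>\<omega>. (V (\<Psi> 0 \<omega>))\<^sup>2 \<partial>M) + B"
proof -
  have drift: "(\<integral>\<^sup>+y. ennreal ((V y)\<^sup>2) \<partial>P t x) \<le> ennreal (A * (V x)\<^sup>2 + B)" for x
  proof -
    have "A * exp (- \<Gamma> * t) * (V x)\<^sup>2 \<le> A * (V x)\<^sup>2"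
      using AB \<Gamma> t by (intro mult_right_mono mult_left_le) auto
    then show ?thesis
      using lyap t by (meson add_right_mono ennreal_leI order_trans)
  qed
  have "integrable M (\<lambda>\<omega>. (V (\<Psi> 0 \<omega>))\<^sup>2)"
    using mom V markov_process_measurable[OF markov order_refl]
    by (intro integrableI_nonneg) (auto simp: nn_integral_distr simp flip: init)
  from markov_process_expectation_le[OF markov t _ _ drift AB this] V
  show "integrable M (\<lambda>\<omega>. (V (\<Psi> t \<omega>))\<^sup>2)"
    "(\<integral>\<omega>. (V (\<Psi> t \<omega>))\<^sup>2 \<partial>M) \<le> A * (\<integral>\<omega>. (V (\<Psi> 0 \<omega>))\<^sup>2 \<partial>M) + B"
    by auto
qed

lemma Pmeas_return:
  assumes "transition_semigroup P" "0 \<le> t"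
  shows "Pmeas P t (return borel x) = P t x"
proof -
  have "P t \<in> borel \<rightarrow>\<^sub>M subprob_algebra borel"
    using assms unfolding transition_semigroup_def by blast
  then show ?thesis
    unfolding Pmeas_def by (rule bind_return) simp
qed

lemma abs_LBINT_Pfun_centered_le:
  fixes P :: "real \<Rightarrow> 'e::metric_space \<Rightarrow> 'e measure" and g :: "'e \<Rightarrow> real"
  assumes TS: "transition_semigroup P"
    and mus: "prob_space \<mu>s" "sets \<mu>s = sets borel"
    and c: "c > 0" "\<And>x. \<bar>g x\<bar> \<le> c" "\<And>x y. \<bar>g x - g y\<bar> \<le> c * dist x y"
    and \<gamma>: "\<gamma> > 0" and decay: "\<And>t. 0 \<le> t \<Longrightarrow> d_FM (P t x) \<mu>s \<le> R * exp (- \<gamma> * t)"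
  shows "\<bar>LBINT t:{0..}. Pfun P t (\<lambda>y. g y - integral\<^sup>L \<mu>s g) x\<bar> \<le> c * R / \<gamma>"
proof -
  have "c-lipschitz_on UNIV g"
    using c(1,3) by (simp add: lipschitz_on_def dist_real_def)
  then have g_meas: "g \<in> borel_measurable borel"
    by (intro borel_measurable_continuous_onI lipschitz_on_continuous_on)
  have "\<bar>Pfun P t (\<lambda>y. g y - integral\<^sup>L \<mu>s g) x\<bar> \<le> c * R * exp (- \<gamma> * t)" if t: "0 \<le> t" for t
  proof -
    have P_sets: "sets (P t x) = sets borel" and P_prob: "prob_space (P t x)"
      using TS t unfolding transition_semigroup_def by blast+
    interpret Pt: prob_space "P t x" by (rule P_prob)
    have "integrable (P t x) g"
      using g_meas c(2)
      by (intro Pt.integrable_const_bound[where B=c]) (auto simp: measurable_cong_sets[OF P_sets refl])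
    then have "\<bar>Pfun P t (\<lambda>y. g y - integral\<^sup>L \<mu>s g) x\<bar> = \<bar>integral\<^sup>L (P t x) g - integral\<^sup>L \<mu>s g\<bar>"
      unfolding Pfun_def by (subst Bochner_Integration.integral_diff) (auto simp: Pt.prob_space)
    also have "\<dots> \<le> c * d_FM (P t x) \<mu>s"
      using abs_integral_diff_le_d_FM[OF P_prob P_sets mus c] .
    also have "\<dots> \<le> c * R * exp (- \<gamma> * t)"
      using decay[OF t] c(1) by (simp add: mult.assoc)
    finally show ?thesis .
  qed
  then show ?thesis
    by (rule abs_LBINT_Ici_le_exp[OF \<gamma>])
qed

lemma abs_potential_le:
  fixes P :: "real \<Rightarrow> 'e::metric_space \<Rightarrow> 'e measure" and g V :: "'e \<Rightarrow> real"
  assumes TS: "transition_semigroup P"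
    and mus: "prob_space \<mu>s" "sets \<mu>s = sets borel"
    and c: "c > 0" "\<And>x. \<bar>g x\<bar> \<le> c" "\<And>x y. \<bar>g x - g y\<bar> \<le> c * dist x y"
    and V: "V \<in> borel_measurable borel" and \<gamma>: "\<gamma> > 0"
    and conv: "\<forall>\<nu>\<in>prob_measures. (\<integral>\<^sup>+x. ennreal (V x) \<partial>\<nu>) < \<infinity> \<longrightarrow>
                 (\<forall>t\<ge>0. d_FM (Pmeas P t \<nu>) \<mu>s \<le> C \<nu> * exp (- \<gamma> * t))"
    and C_dirac: "\<forall>x. C (return borel x) = \<kappa> * sqrt (V x + 1)"
  shows "\<bar>LBINT t:{0..}. Pfun P t (\<lambda>y. g y - integral\<^sup>L \<mu>s g) x\<bar> \<le> c * \<kappa> / \<gamma> * sqrt (V x + 1)"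
proof -
  have "d_FM (P t x) \<mu>s \<le> \<kappa> * sqrt (V x + 1) * exp (- \<gamma> * t)" if "0 \<le> t" for t
    using conv[rule_format, of "return borel x" t] C_dirac Pmeas_return[OF TS that] that V
    by (simp add: prob_measures_def prob_space_return nn_integral_return)
  from abs_LBINT_Pfun_centered_le[OF TS mus c \<gamma> this] show ?thesis
    by (simp add: mult_ac)
qed

lemma square_add3_le:
  fixes x y z :: real
  shows "(x + y + z)\<^sup>2 \<le> 3 * (x\<^sup>2 + y\<^sup>2 + z\<^sup>2)"
proof -
  have "0 \<le> (x - y)\<^sup>2 + (x - z)\<^sup>2 + (y - z)\<^sup>2" by simp
  then show ?thesis by (simp add: power2_eq_square algebra_simps)
qed

lemma fourth_power_le_of_sqrt_bounds:
  fixes u v w K G a b :: real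
  assumes u: "\<bar>u\<bar> \<le> K * sqrt (a + 1)" and v: "\<bar>v\<bar> \<le> K * sqrt (b + 1)" and w: "\<bar>w\<bar> \<le> G"
    and ab: "0 \<le> a" "0 \<le> b"
  shows "(u - v + w) ^ 4 \<le> 3 * (6 * K\<^sup>2 + 3 * G\<^sup>2)\<^sup>2 * (a\<^sup>2 + b\<^sup>2 + 1)"
proof -
  define D where "D = 6 * K\<^sup>2 + 3 * G\<^sup>2"
  have "u\<^sup>2 \<le> K\<^sup>2 * (a + 1)" "v\<^sup>2 \<le> K\<^sup>2 * (b + 1)" "w\<^sup>2 \<le> G\<^sup>2"
    using power_mono[OF u abs_ge_zero, of 2] power_mono[OF v abs_ge_zero, of 2]
      power_mono[OF w abs_ge_zero, of 2] ab
    by (simp_all add: power_mult_distrib)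
  then have "(u - v + w)\<^sup>2 \<le> 3 * (K\<^sup>2 * (a + 1) + K\<^sup>2 * (b + 1) + G\<^sup>2)"
    using square_add3_le[of u "- v" w] by simp
  also have "\<dots> \<le> D * (a + b + 1)"
    using ab mult_left_mono[of 1 "a + b + 1" "G\<^sup>2"] mult_left_mono[of "a + 1" "a + b + 1" "K\<^sup>2"]
      mult_left_mono[of "b + 1" "a + b + 1" "K\<^sup>2"]
    by (simp add: D_def algebra_simps)
  finally have sq: "(u - v + w)\<^sup>2 \<le> D * (a + b + 1)" .
  have "(u - v + w) ^ 4 = ((u - v + w)\<^sup>2)\<^sup>2"
    by (simp flip: power_mult)
  also have "\<dots> \<le> (D * (a + b + 1))\<^sup>2"
    using sq by (intro power_mono) auto
  also have "\<dots> = D\<^sup>2 * (a + b + 1)\<^sup>2"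
    by (simp add: power_mult_distrib)
  also have "\<dots> \<le> D\<^sup>2 * (3 * (a\<^sup>2 + b\<^sup>2 + 1))"
    using square_add3_le[of a b 1] by (intro mult_left_mono) simp_all
  finally show ?thesis
    by (simp add: D_def algebra_simps)
qed

lemma square_indicator_le_fourth_power:
  fixes f :: "'a \<Rightarrow> real"
  assumes "0 < e"
  shows "(f x)\<^sup>2 * indicator {x. \<bar>f x\<bar> \<ge> e} x \<le> (f x) ^ 4 / e\<^sup>2"
proof (cases "\<bar>f x\<bar> \<ge> e")
  case True
  then have "e\<^sup>2 * (f x)\<^sup>2 \<le> (f x)\<^sup>2 * (f x)\<^sup>2"
    using assms by (intro mult_right_mono) (auto simp: abs_le_square_iff[symmetric])
  then show ?thesis
    using True assms by (simp add: le_divide_eq mult.commute flip: power2_eq_square power_mult)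
qed simp

lemma lindeberg_of_fourth_moment_bound:
  fixes Z :: "nat \<Rightarrow> 'a \<Rightarrow> real"
  assumes "prob_space M" and H: "\<And>i x. (Z (i + 1) x) ^ 4 \<le> H i x" "\<And>i. integrable M (H i)"
    "\<And>i. integral\<^sup>L M (H i) \<le> h" and \<epsilon>: "\<epsilon> > 0"
  shows "(\<lambda>n::nat. (1 / real n) * (\<Sum>i<n.
           \<integral>x. (Z (i + 1) x)\<^sup>2 * indicator {x. \<bar>Z (i + 1) x\<bar> \<ge> \<epsilon> * sqrt (real n)} x \<partial>M))
         \<longlonglongrightarrow> 0"
proof (rule Lim_null_comparison)
  show "(\<lambda>n. h / \<epsilon>\<^sup>2 * (1 / real n)) \<longlonglongrightarrow> 0"
    by (intro tendsto_mult_right_zero lim_inverse_n')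
  have "norm ((1 / real n) * (\<Sum>i<n.
           \<integral>x. (Z (i + 1) x)\<^sup>2 * indicator {x. \<bar>Z (i + 1) x\<bar> \<ge> \<epsilon> * sqrt (real n)} x \<partial>M))
        \<le> h / \<epsilon>\<^sup>2 * (1 / real n)" if n: "1 \<le> n" for n
  proof -
    have e: "0 < \<epsilon> * sqrt (real n)" "(\<epsilon> * sqrt (real n))\<^sup>2 = \<epsilon>\<^sup>2 * real n"
      using \<epsilon> n by (auto simp: power_mult_distrib)
    have term_le: "\<bar>\<integral>x. (Z (i + 1) x)\<^sup>2 * indicator {x. \<bar>Z (i + 1) x\<bar> \<ge> \<epsilon> * sqrt (real n)} x \<partial>M\<bar>
        \<le> h / (\<epsilon>\<^sup>2 * real n)" for i
    proof -
      have "\<bar>\<integral>x. (Z (i + 1) x)\<^sup>2 * indicator {x. \<bar>Z (i + 1) x\<bar> \<ge> \<epsilon> * sqrt (real n)} x \<partial>M\<bar>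
          \<le> (\<integral>x. H i x / (\<epsilon>\<^sup>2 * real n) \<partial>M)"
      proof (rule abs_integral_le_integral_AE)
        show "AE x in M. \<bar>(Z (i + 1) x)\<^sup>2 * indicator {x. \<bar>Z (i + 1) x\<bar> \<ge> \<epsilon> * sqrt (real n)} x\<bar>
            \<le> H i x / (\<epsilon>\<^sup>2 * real n)"
        proof (intro AE_I2)
          fix x
          have "(Z (i + 1) x)\<^sup>2 * indicator {x. \<bar>Z (i + 1) x\<bar> \<ge> \<epsilon> * sqrt (real n)} x
              \<le> (Z (i + 1) x) ^ 4 / (\<epsilon>\<^sup>2 * real n)"
            using square_indicator_le_fourth_power[OF e(1), of "Z (i + 1)"] e(2) by simp
          also have "\<dots> \<le> H i x / (\<epsilon>\<^sup>2 * real n)"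
            using H(1) by (intro divide_right_mono) auto
          finally show "\<bar>(Z (i + 1) x)\<^sup>2 * indicator {x. \<bar>Z (i + 1) x\<bar> \<ge> \<epsilon> * sqrt (real n)} x\<bar>
              \<le> H i x / (\<epsilon>\<^sup>2 * real n)"
            by (simp add: indicator_def)
        qed
      qed (use H(2) in auto)
      also have "\<dots> \<le> h / (\<epsilon>\<^sup>2 * real n)"
        using H(3)[of i] e by (simp add: divide_right_mono)
      finally show ?thesis .
    qed
    have "norm ((1 / real n) * (\<Sum>i<n.
             \<integral>x. (Z (i + 1) x)\<^sup>2 * indicator {x. \<bar>Z (i + 1) x\<bar> \<ge> \<epsilon> * sqrt (real n)} x \<partial>M))
          \<le> (1 / real n) * (\<Sum>i<n. h / (\<epsilon>\<^sup>2 * real n))"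
      unfolding real_norm_def abs_mult using term_le
      by (intro mult_mono order_trans[OF sum_abs sum_mono]) auto
    also have "\<dots> = h / \<epsilon>\<^sup>2 * (1 / real n)"
      using n by simp
    finally show ?thesis .
  qed
  then show "\<forall>\<^sub>F n in sequentially. norm ((1 / real n) * (\<Sum>i<n.
           \<integral>x. (Z (i + 1) x)\<^sup>2 * indicator {x. \<bar>Z (i + 1) x\<bar> \<ge> \<epsilon> * sqrt (real n)} x \<partial>M))
        \<le> h / \<epsilon>\<^sup>2 * (1 / real n)"
    by (rule eventually_sequentiallyI)
qed

theorem lemma3p11:
  fixes M :: "'w measure" and \<Psi> :: "real \<Rightarrow> 'w \<Rightarrow> 'e::polish_space"
    and P :: "real \<Rightarrow> 'e \<Rightarrow> 'e measure" and \<mu> \<mu>s :: "'e measure"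
    and V :: "'e \<Rightarrow> real" and C :: "'e measure \<Rightarrow> real"
    and \<gamma> \<kappa> A B \<Gamma> :: real and g :: "'e \<Rightarrow> real"
  assumes markov: "markov_process M \<Psi> P"
    and init: "distr M borel (\<Psi> 0) = \<mu>"
    and V_cont: "continuous_on UNIV V" and V_nonneg: "\<forall>x. V x \<ge> 0"
    and feller: "\<forall>t\<ge>0. \<forall>f::'e \<Rightarrow> real. continuous_on UNIV f \<and> bounded (range f) \<longrightarrow>
                   continuous_on UNIV (Pfun P t f) \<and> bounded (range (Pfun P t f))"
    and inv: "invariant_measure P \<mu>s"
    and inv_unique: "\<forall>\<nu>. invariant_measure P \<nu> \<longrightarrow> \<nu> = \<mu>s"
    and \<gamma>_pos: "\<gamma> > 0"
    and C_nonneg: "\<forall>\<nu>\<in>prob_measures. (\<integral>\<^sup>+x. ennreal (V x) \<partial>\<nu>) < \<infinity> \<longrightarrow> C \<nu> \<ge> 0"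
    and conv: "\<forall>\<nu>\<in>prob_measures. (\<integral>\<^sup>+x. ennreal (V x) \<partial>\<nu>) < \<infinity> \<longrightarrow>
                 (\<forall>t\<ge>0. d_FM (Pmeas P t \<nu>) \<mu>s \<le> C \<nu> * exp (- \<gamma> * t))"
    and \<kappa>_pos: "\<kappa> > 0"
    and C_dirac: "\<forall>x. C (return borel x) = \<kappa> * sqrt (V x + 1)"
    and AB: "A \<ge> 0" "B \<ge> 0" and \<Gamma>_pos: "\<Gamma> > 0"
    and lyap: "\<forall>t\<ge>0. \<forall>x. (\<integral>\<^sup>+y. ennreal ((V y)\<^sup>2) \<partial>(P t x))
                         \<le> ennreal (A * exp (- \<Gamma> * t) * (V x)\<^sup>2 + B)"
    and mom: "(\<integral>\<^sup>+x. ennreal ((V x)\<^sup>2) \<partial>\<mu>) < \<infinity>"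
    and g_lip: "g \<in> Lip_b"
  shows "let gbar = (\<lambda>x. g x - integral\<^sup>L \<mu>s g);
             chi = (\<lambda>x. LBINT t:{0..}. Pfun P t gbar x);
             Z = (\<lambda>(n::nat) \<omega>. chi (\<Psi> (real n) \<omega>) - chi (\<Psi> (real n - 1) \<omega>)
                              + (LBINT s:{real n - 1..real n}. gbar (\<Psi> s \<omega>)))
         in \<forall>\<epsilon>>0. (\<lambda>n::nat. (1 / real n) * (\<Sum>i<n.
                  \<integral>\<omega>. (Z (i+1) \<omega>)\<^sup>2 * indicator {\<omega>. \<bar>Z (i+1) \<omega>\<bar> \<ge> \<epsilon> * sqrt (real n)} \<omega> \<partial>M))
              \<longlonglongrightarrow> 0"
proof -
  interpret prob_space M
    using markov unfolding markov_process_def by blast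
  have TS: "transition_semigroup P"
    using markov unfolding markov_process_def by blast
  obtain c where c: "c > 0" "\<And>x. \<bar>g x\<bar> \<le> c" "\<And>x y. \<bar>g x - g y\<bar> \<le> c * dist x y"
    using Lip_bE[OF g_lip] by blast
  have mus: "prob_space \<mu>s" "sets \<mu>s = sets borel"
    using inv unfolding invariant_measure_def prob_measures_def by auto
  have V_meas: "V \<in> borel_measurable borel"
    using V_cont by (rule borel_measurable_continuous_onI)
  define gbar where "gbar = (\<lambda>x. g x - integral\<^sup>L \<mu>s g)"
  define chi where "chi = (\<lambda>x. LBINT t:{0..}. Pfun P t gbar x)"
  define Z where "Z = (\<lambda>(n::nat) \<omega>. chi (\<Psi> (real n) \<omega>) - chi (\<Psi> (real n - 1) \<omega>)
                              + (LBINT s:{real n - 1..real n}. gbar (\<Psi> s \<omega>)))"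
  define D where "D = 6 * (c * \<kappa> / \<gamma>)\<^sup>2 + 3 * (2 * c)\<^sup>2"
  define H where "H = (\<lambda>(i::nat) \<omega>. 3 * D\<^sup>2 * ((V (\<Psi> (real i + 1) \<omega>))\<^sup>2 + (V (\<Psi> (real i) \<omega>))\<^sup>2 + 1))"
  have chi_le: "\<bar>chi x\<bar> \<le> c * \<kappa> / \<gamma> * sqrt (V x + 1)" for x
    unfolding chi_def gbar_def by (rule abs_potential_le[OF TS mus c V_meas \<gamma>_pos conv C_dirac])
  have "\<bar>gbar x\<bar> \<le> 2 * c" for x
    using c(2)[of x] abs_integral_le_const_prob[of \<mu>s g c, OF mus(1) c(2)] unfolding gbar_def by linarith
  then have int_le: "\<bar>LBINT s:{real i..real i + 1}. gbar (\<Psi> s \<omega>)\<bar> \<le> 2 * c" for i \<omega>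
    using abs_LBINT_Icc_le[of "real i" "real i + 1"] by simp
  have Z_le: "(Z (i + 1) \<omega>) ^ 4 \<le> H i \<omega>" for i \<omega>
    using fourth_power_le_of_sqrt_bounds[OF chi_le[of "\<Psi> (real i + 1) \<omega>"] chi_le[of "\<Psi> (real i) \<omega>"]
        int_le V_nonneg[rule_format] V_nonneg[rule_format]]
    by (simp add: Z_def D_def H_def add.commute)
  note moments = markov_process_Lyapunov_moments[OF markov init V_meas AB less_imp_le[OF \<Gamma>_pos] lyap mom]
  define E where "E = A * (\<integral>\<omega>. (V (\<Psi> 0 \<omega>))\<^sup>2 \<partial>M) + B"
  have H_int: "integrable M (H i)" and H_le: "integral\<^sup>L M (H i) \<le> 3 * D\<^sup>2 * (2 * E + 1)" for i
    using moments[of "real i"] moments[of "real i + 1"]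
    by (auto simp: H_def E_def prob_space intro!: mult_left_mono)
  show ?thesis
    unfolding Let_def
    using lindeberg_of_fourth_moment_bound[where Z=Z, OF prob_space_axioms Z_le H_int H_le]
    unfolding Z_def chi_def gbar_def by blast
qed

end
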